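(* Let $S$ be a Stone relation algebra. Then: 1. For all ideal-points $p,q\in S$ with $p\neq q$: $p\sqcap q=\bot$ and $p^{\smile}q=\bot$. 2. If $S$ is simple, then every point of $S$ is an ideal-point. 3. An element $p\in S$ is an ideal-point if and only if $p$ is a point and for every point $q\in S$, $q\sqsubseteq p$ or $q\sqsubseteq\overline{p}$.
   Context: A Stone relation algebra is a structure $(S,\sqcup,\sqcap,\cdot,\overline{\,\cdot\,},{}^{\smile},\bot,\top,1)$ (write $xy$ for $x\cdot y$, $\overline{x}$ for the pseudocomplement, $x^{\smile}$ for the converse) such that: $(S,\sqcup,\sqcap,\bot,\top)$ is a bounded distributive lattice with order $x\sqsubseteq y\iff x\sqcup y=y$; $x\sqcap y=\bot\iff x\sqsubseteq\overline{y}$; $\overline{x}\sqcup\overline{\overline{x}}=\top$; $\cdot$ is associative with two-sided unit $1$, distributes over $\sqcup$ on both sides, and $\bot$ is a zero of $\cdot$; $x^{\smile\smile}=x$, $(xy)^{\smile}=y^{\smile}x^{\smile}$, $(x\sqcup y)^{\smile}=x^{\smile}\sqcup y^{\smile}$; $\overline{\overline{1}}=1$; $\overline{\overline{xy}}=\overline{\overline{x}}\,\overline{\overline{y}}$; $xy\sqcap z\sqsubseteq x(y\sqcap x^{\smile}z)$. $x$ is injective if $xx^{\smile}\sqsubseteq1$, surjective if $1\sqsubseteq x^{\smile}x$, a vector if $x\top=x$, a covector if $\top x=x$, an ideal if it is a vector and a covector, a point if it is an injective surjective vector, and simple if $\top x\top=\top$. $S$ is simple if every element other than $\bot$ is simple.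 An ideal-point is a point $p$ such that for all points $q$ and all ideals $x\neq\bot$, $qx\sqsubseteq p$ implies $q\sqsubseteq p$. *)

theory Defs
  imports Main
begin

class conv =
  fixes conv :: "'a \<Rightarrow> 'a"

class stone_relation_algebra = bounded_lattice + distrib_lattice + uminus + monoid_mult + conv +
  assumes pseudo_compl: "inf x y = bot \<longleftrightarrow> x \<le> - y"
  assumes stone: "sup (- x) (- (- x)) = top"
  assumes mult_sup_distl: "x * sup y z = sup (x * y) (x * z)"
  assumes mult_sup_distr: "sup x y * z = sup (x * z) (y * z)"
  assumes mult_bot_left: "bot * x = bot"
  assumes mult_bot_right: "x * bot = bot"
  assumes conv_involutive: "conv (conv x) = x"
  assumes conv_mult: "conv (x * y) = conv y * conv x"
  assumes conv_sup: "conv (sup x y) = sup (conv x) (conv y)"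
  assumes pp_one: "- (- 1) = 1"
  assumes pp_mult: "- (- (x * y)) = (- (- x)) * (- (- y))"
  assumes dedekind_1: "inf (x * y) z \<le> x * inf y (conv x * z)"

definition injective :: "'a::stone_relation_algebra \<Rightarrow> bool" where
  "injective x \<longleftrightarrow> x * conv x \<le> 1"

definition surjective :: "'a::stone_relation_algebra \<Rightarrow> bool" where
  "surjective x \<longleftrightarrow> 1 \<le> conv x * x"

definition vector :: "'a::stone_relation_algebra \<Rightarrow> bool" where
  "vector x \<longleftrightarrow> x * top = x"

definition covector :: "'a::stone_relation_algebra \<Rightarrow> bool" where
  "covector x \<longleftrightarrow> top * x = x"

definition ideal :: "'a::stone_relation_algebra \<Rightarrow> bool" where
  "ideal x \<longleftrightarrow> vector x \<and> covector x"

definition point :: "'a::stone_relation_algebra \<Rightarrow> bool" where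
  "point x \<longleftrightarrow> injective x \<and> surjective x \<and> vector x"

definition simple_elem :: "'a::stone_relation_algebra \<Rightarrow> bool" where
  "simple_elem x \<longleftrightarrow> top * x * top = top"

definition ideal_point :: "'a::stone_relation_algebra \<Rightarrow> bool" where
  "ideal_point p \<longleftrightarrow> point p \<and>
     (\<forall>q x. point q \<and> ideal x \<and> x \<noteq> bot \<and> q * x \<le> p \<longrightarrow> q \<le> p)"

end

theory Submission
  imports Defs
begin

text \<open>A point q meeting a point p generates the nonzero ideal top * inf q p * top, and the
  Dedekind rule together with injectivity of q gives q * (top * inf q p * top) \<le> p. Hence
  every point lies below an ideal-point p or below its pseudocomplement. Conversely, a
  surjective q annihilates no nonzero x, so a point below -p cannot satisfy q * x \<le> p for
  a nonzero ideal x; this yields the characterisation of ideal-points. Since a point below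
  another point equals it, distinct ideal-points lie below each other's pseudocomplements.
  In a simple algebra the only nonzero ideal is top, and q * top = q.\<close>

lemma mult_left_isotone: "(x::'a::stone_relation_algebra) \<le> y \<Longrightarrow> x * z \<le> y * z"
  by (metis le_iff_sup mult_sup_distr)

lemma mult_right_isotone: "(x::'a::stone_relation_algebra) \<le> y \<Longrightarrow> z * x \<le> z * y"
  by (metis le_iff_sup mult_sup_distl)

lemma conv_isotone: "(x::'a::stone_relation_algebra) \<le> y \<Longrightarrow> conv x \<le> conv y"
  by (metis le_iff_sup conv_sup)

lemma conv_top: "conv (top::'a::stone_relation_algebra) = top"
  by (metis conv_involutive conv_isotone top.extremum top.extremum_uniqueI)

lemma conv_inf: "conv (inf (x::'a::stone_relation_algebra) y) = inf (conv x) (conv y)"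
proof (rule order.antisym)
  show "conv (inf x y) \<le> inf (conv x) (conv y)"
    by (simp add: conv_isotone)
  have "conv (inf (conv x) (conv y)) \<le> inf x y"
    by (metis conv_involutive conv_isotone inf.cobounded1 inf.cobounded2 le_inf_iff)
  then show "inf (conv x) (conv y) \<le> conv (inf x y)"
    by (metis conv_involutive conv_isotone)
qed

lemma dedekind_2: "inf ((x::'a::stone_relation_algebra) * y) z \<le> inf x (z * conv y) * y"
proof -
  have "conv (inf (x * y) z) \<le> conv y * inf (conv x) (conv (conv y) * conv z)"
    by (simp add: conv_inf conv_mult dedekind_1)
  then have "conv (conv (inf (x * y) z)) \<le> conv (conv y * inf (conv x) (conv (conv y) * conv z))"
    by (rule conv_isotone)
  then show ?thesis
    by (simp add: conv_mult conv_inf conv_involutive)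
qed

lemma top_mult_top: "(top::'a::stone_relation_algebra) * top = top"
  by (metis mult_1_left mult_left_isotone top.extremum top.extremum_uniqueI)

lemma le_top_mult_top: "(x::'a::stone_relation_algebra) \<le> top * x * top"
  by (metis mult_1_left mult_1_right mult_left_isotone mult_right_isotone top.extremum order.trans)

lemma ideal_top_mult_top: "ideal (top * (x::'a::stone_relation_algebra) * top)"
proof -
  have "top * x * top * top = top * x * top"
    by (simp add: mult.assoc top_mult_top)
  moreover have "top * (top * x * top) = top * x * top"
    by (simp add: mult.assoc[symmetric] top_mult_top)
  ultimately show ?thesis
    by (simp add: ideal_def vector_def covector_def)
qed

lemma vector_conv_covector: "vector (x::'a::stone_relation_algebra) \<Longrightarrow> covector (conv x)"
  by (metis vector_def covector_def conv_mult conv_top)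

lemma surjective_vector_conv_mult_top:
  fixes x :: "'a::stone_relation_algebra"
  assumes "surjective x" and "vector x"
  shows "conv x * x = top"
proof -
  have "top * 1 \<le> top * (conv x * x)"
    using assms(1) surjective_def mult_right_isotone by blast
  also have "\<dots> = conv x * x"
    using assms(2) vector_conv_covector covector_def by (metis mult.assoc)
  finally show ?thesis
    by (simp add: top.extremum_uniqueI)
qed

lemma surjective_mult_eq_bot:
  "surjective (q::'a::stone_relation_algebra) \<Longrightarrow> q * x = bot \<Longrightarrow> x = bot"
  by (metis surjective_def mult_left_isotone mult_1_left mult.assoc mult_bot_right bot_unique)

lemma vector_disjoint_conv_mult:
  fixes p q :: "'a::stone_relation_algebra"
  assumes "vector p" and "inf p q = bot"
  shows "conv p * q = bot"
proof -
  have "conv p * q = inf (conv p * q) top"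
    by simp
  also have "\<dots> \<le> conv p * inf q (conv (conv p) * top)"
    by (rule dedekind_1)
  also have "\<dots> = bot"
    using assms by (simp add: conv_involutive vector_def inf.commute mult_bot_right)
  finally show ?thesis
    by (simp add: bot_unique)
qed

lemma simple_ideal_eq_top:
  "ideal (x::'a::stone_relation_algebra) \<Longrightarrow> simple_elem x \<Longrightarrow> x = top"
  by (simp add: ideal_def vector_def covector_def simple_elem_def mult.assoc)

lemma point_le_point_eq:
  fixes p q :: "'a::stone_relation_algebra"
  assumes "point p" and "point q" and "q \<le> p"
  shows "p = q"
proof -
  have "p = p * (conv q * q)"
    using assms by (simp add: point_def surjective_vector_conv_mult_top vector_def)
  also have "\<dots> \<le> p * conv p * q"
    using assms(3) by (simp add: mult.assoc[symmetric] conv_isotone mult_left_isotone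
        mult_right_isotone)
  also have "\<dots> \<le> q"
    using assms(1) by (metis point_def injective_def mult_left_isotone mult_1_left)
  finally show ?thesis
    using assms(3) by (rule order.antisym)
qed

lemma injective_vector_mult_ideal_le:
  fixes q a :: "'a::stone_relation_algebra"
  assumes "injective q" and "vector q" and "a \<le> q"
  shows "q * (top * a * top) \<le> a * top"
proof -
  have "q * (top * a * top) \<le> top * (top * a * top)"
    by (simp add: mult_left_isotone)
  moreover have "q * (top * a * top) \<le> q * top"
    by (simp add: mult_right_isotone)
  ultimately have "q * (top * a * top) \<le> inf (top * (a * top)) q"
    using assms(2) ideal_top_mult_top[of a]
    by (simp add: ideal_def covector_def vector_def mult.assoc)
  also have "\<dots> \<le> inf top (q * conv (a * top)) * (a * top)"
    by (rule dedekind_2)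
  also have "\<dots> = q * top * conv a * a * top"
    by (simp add: conv_mult conv_top mult.assoc)
  also have "\<dots> \<le> q * conv q * a * top"
    using assms(2,3) by (simp add: vector_def conv_isotone mult_left_isotone mult_right_isotone)
  also have "\<dots> \<le> a * top"
    using assms(1) by (metis injective_def mult_left_isotone mult_1_left)
  finally show ?thesis .
qed

lemma ideal_point_dichotomy:
  fixes p q :: "'a::stone_relation_algebra"
  assumes "ideal_point p" and "point q"
  shows "q \<le> p \<or> q \<le> - p"
proof (cases "inf q p = bot")
  case True
  then show ?thesis
    using pseudo_compl by blast
next
  case False
  have "top * inf q p * top \<noteq> bot"
    using False le_top_mult_top bot_unique by metis
  moreover have "q * (top * inf q p * top) \<le> p"
  proof -
    have "q * (top * inf q p * top) \<le> inf q p * top"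
      using assms(2) by (simp add: point_def injective_vector_mult_ideal_le)
    also have "\<dots> \<le> p * top"
      by (simp add: mult_left_isotone)
    finally show ?thesis
      using assms(1) by (simp add: ideal_point_def point_def vector_def)
  qed
  ultimately show ?thesis
    using assms ideal_top_mult_top unfolding ideal_point_def by blast
qed

lemma ideal_point_iff_point_dichotomy:
  "ideal_point (p::'a::stone_relation_algebra) \<longleftrightarrow>
    point p \<and> (\<forall>q. point q \<longrightarrow> q \<le> p \<or> q \<le> - p)"
proof
  assume "ideal_point p"
  then show "point p \<and> (\<forall>q. point q \<longrightarrow> q \<le> p \<or> q \<le> - p)"
    using ideal_point_dichotomy ideal_point_def by blast
next
  assume dichotomy: "point p \<and> (\<forall>q. point q \<longrightarrow> q \<le> p \<or> q \<le> - p)"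
  have "q \<le> p" if "point q" "ideal x" "x \<noteq> bot" "q * x \<le> p" for q x
  proof (rule ccontr)
    assume "\<not> q \<le> p"
    then have "q \<le> - p"
      using dichotomy that(1) by blast
    moreover have "q * x \<le> q * top"
      by (simp add: mult_right_isotone)
    ultimately have "q * x \<le> inf p (- p)"
      using that(1,4) by (simp add: point_def vector_def)
    also have "\<dots> = bot"
      using pseudo_compl[of "- p" p] by (simp add: inf.commute)
    finally have "q * x = bot"
      by (simp add: bot_unique)
    then show False
      using that(1,3) surjective_mult_eq_bot point_def by blast
  qed
  then show "ideal_point p"
    using dichotomy unfolding ideal_point_def by blast
qed

lemma distinct_ideal_points_disjoint:
  fixes p q :: "'a::stone_relation_algebra"
  assumes "ideal_point p" and "ideal_point q" and "p \<noteq> q"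
  shows "inf p q = bot" and "conv p * q = bot"
proof -
  have "point p" and "point q"
    using assms(1,2) ideal_point_def by blast+
  then have "q \<le> - p"
    using assms ideal_point_dichotomy point_le_point_eq by blast
  then show "inf p q = bot"
    using pseudo_compl[of q p] by (simp add: inf.commute)
  then show "conv p * q = bot"
    using \<open>point p\<close> point_def vector_disjoint_conv_mult by blast
qed

lemma simple_point_ideal_point:
  fixes p :: "'a::stone_relation_algebra"
  assumes "\<forall>x :: 'a. x \<noteq> bot \<longrightarrow> simple_elem x" and "point p"
  shows "ideal_point p"
proof -
  have "q \<le> p" if "point q" "ideal x" "x \<noteq> bot" "q * x \<le> p" for q x :: 'a
  proof -
    have "x = top"
      using assms(1) that(2,3) simple_ideal_eq_top by blast
    then show ?thesis
      using that(1,4) by (simp add: point_def vector_def)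
  qed
  then show ?thesis
    using assms(2) unfolding ideal_point_def by blast
qed

theorem mainTheorem11:
  shows "(\<forall>p q :: 'a::stone_relation_algebra.
            ideal_point p \<and> ideal_point q \<and> p \<noteq> q \<longrightarrow> inf p q = bot \<and> conv p * q = bot)
       \<and> ((\<forall>x :: 'a. x \<noteq> bot \<longrightarrow> simple_elem x) \<longrightarrow> (\<forall>p :: 'a. point p \<longrightarrow> ideal_point p))
       \<and> (\<forall>p :: 'a. ideal_point p \<longleftrightarrow> point p \<and> (\<forall>q. point q \<longrightarrow> q \<le> p \<or> q \<le> - p))"
proof (intro conjI allI impI)
  fix p q :: 'a
  assume "ideal_point p \<and> ideal_point q \<and> p \<noteq> q"
  then show "inf p q = bot" and "conv p * q = bot"
    using distinct_ideal_points_disjoint by blast+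
next
  fix p :: 'a
  assume "\<forall>x :: 'a. x \<noteq> bot \<longrightarrow> simple_elem x" and "point p"
  then show "ideal_point p"
    by (rule simple_point_ideal_point)
next
  fix p :: 'a
  show "ideal_point p \<longleftrightarrow> point p \<and> (\<forall>q. point q \<longrightarrow> q \<le> p \<or> q \<le> - p)"
    by (rule ideal_point_iff_point_dichotomy)
qed

end
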